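(* Suppose $n<p$. If $q\in[0,2]$, then $$\inf_{A\in\mathbb{R}^{n\times p}}\ \inf_{\delta:\mathbb{R}^n\to\mathbb{R}}\ \sup_{x\in\mathbb{R}^p\setminus\{0\}}\Big|\frac{\delta(Ax)}{s_q(x)}-1\Big|\ge\frac1{2\pi e}\Big(1-\frac np\Big)^2-\frac1{2p}.$$ If $q\in(2,\infty]$, then $$\inf_{A\in\mathbb{R}^{n\times p}}\ \inf_{\delta:\mathbb{R}^n\to\mathbb{R}}\ \sup_{x\in\mathbb{R}^p\setminus\{0\}}\Big|\frac{\delta(Ax)}{s_q(x)}-1\Big|\ge\frac1{\sqrt{2\pi e}}\cdot\frac{1-(n/p)}{1+\sqrt{16\log(2p)}}-\frac1{2p}.$$
   Context: The infimum over $\delta$ is over all functions $\mathbb{R}^n\to\mathbb{R}$ (estimators using noiseless deterministic measurements $y=Ax$). For $x\in\mathbb{R}^p\setminus\{0\}$ let $\pi_j(x):=|x_j|/\|x\|_1$. For $q\notin\{0,1,\infty\}$, $s_q(x):=(\|x\|_q/\|x\|_1)^{q/(1-q)}=\exp\big(\frac1{1-q}\log\sum_j\pi_j(x)^q\big)$; $s_0(x):=\|x\|_0$ (number of nonzero entries), $s_1(x):=\exp\big(-\sum_j\pi_j(x)\log\pi_j(x)\big)$, $s_\infty(x):=\|x\|_1/\|x\|_\infty$ (these are the limits of $s_q$ as $q\to0,1,\infty$). *)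

theory Defs
  imports "HOL-Analysis.Analysis"
begin

definition l1norm :: "real ^ 'p \<Rightarrow> real" where
  "l1norm x = (\<Sum>j\<in>UNIV. \<bar>x $ j\<bar>)"

definition pvec :: "real ^ 'p \<Rightarrow> 'p \<Rightarrow> real" where
  "pvec x j = \<bar>x $ j\<bar> / l1norm x"

text \<open>Numerical sparsity s_q(x), for q in [0, infinity] (q as extended real).
  q = 0: number of nonzero entries; q = 1: exponential of Shannon entropy
  (with 0 log 0 = 0, which matches ln 0 = 0 in Isabelle);
  q = infinity: ||x||_1 / ||x||_inf;
  otherwise exp(1/(1-q) * log(sum_j pi_j(x)^q)).\<close>
definition sq :: "ereal \<Rightarrow> real ^ 'p \<Rightarrow> real" where
  "sq q x =
    (if q = \<infinity> then l1norm x / Max (range (\<lambda>j. \<bar>x $ j\<bar>))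
     else if q = 0 then real (card {j. x $ j \<noteq> 0})
     else if q = 1 then exp (- (\<Sum>j\<in>UNIV. pvec x j * ln (pvec x j)))
     else exp (1 / (1 - real_of_ereal q) *
               ln (\<Sum>j\<in>UNIV. pvec x j powr real_of_ereal q)))"

end

theory Submission
  imports Defs
begin

text \<open>Both lower bounds are at most 1/3 (as 2\<pi>e \<ge> 9), and 1/3 is itself a lower bound. Since
  n < p, the matrix A has a nonzero kernel vector v. Changing one coordinate of v produces a vector x
  whose two largest entries in absolute value are equal, while y = x - v is 1-sparse. Then
  Ax = Ay, s_q(y) = 1 and s_q(x) \<ge> s_\<infinity>(x) \<ge> 2, so no single value \<delta>(Ax) has relative
  error below 1/3 for both vectors.\<close>

lemma matrix_vector_mult_kernel_nontrivial:
  fixes A :: "real ^ 'p ^ 'n"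
  assumes "CARD('n) < CARD('p)"
  obtains v where "v \<noteq> 0" "A *v v = 0"
proof -
  have "\<not> inj ((*v) A)"
  proof
    assume inj: "inj ((*v) A)"
    have "dim ((*v) A ` UNIV) = dim (UNIV :: (real ^ 'p) set)"
      by (rule dim_image_eq[OF matrix_vector_mul_linear]) (use inj in \<open>auto intro: inj_on_subset\<close>)
    moreover have "dim ((*v) A ` UNIV) \<le> CARD('n)"
      by (metis dim_subset_UNIV DIM_cart DIM_real mult.right_neutral)
    ultimately show False using assms by (simp add: dim_UNIV)
  qed
  then obtain u w where "u \<noteq> w" "A *v u = A *v w"
    by (auto simp: inj_def)
  then show ?thesis
    using that[of "u - w"] by (simp add: matrix_vector_mult_diff_distrib)
qed

lemma powr_eq_mult_powr_minus_one: "0 < x \<Longrightarrow> x powr r = x * x powr (r - 1)"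
  for x r :: real
  by (simp add: powr_diff)

lemma sum_powr_le_bound_powr:
  fixes p :: "'a \<Rightarrow> real"
  assumes nonneg: "\<And>k. k \<in> S \<Longrightarrow> 0 \<le> p k"
    and bound: "\<And>k. k \<in> S \<Longrightarrow> p k \<le> \<mu>" and total: "sum p S = 1" and r: "1 \<le> r"
  shows "(\<Sum>k\<in>S. p k powr r) \<le> \<mu> powr (r - 1)"
proof -
  have "(\<Sum>k\<in>S. p k powr r) \<le> (\<Sum>k\<in>S. p k * \<mu> powr (r - 1))"
  proof (rule sum_mono)
    fix k assume k: "k \<in> S"
    show "p k powr r \<le> p k * \<mu> powr (r - 1)"
    proof (cases "p k = 0")
      case False
      then have "0 < p k" using nonneg k by force
      moreover have "p k powr (r - 1) \<le> \<mu> powr (r - 1)"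
        using \<open>0 < p k\<close> bound k r by (intro powr_mono2) auto
      ultimately show ?thesis
        using powr_eq_mult_powr_minus_one[of "p k" r] by (simp add: mult_left_mono)
    qed simp
  qed
  also have "\<dots> = \<mu> powr (r - 1)"
    using total by (simp add: sum_distrib_right[symmetric])
  finally show ?thesis .
qed

lemma bound_powr_le_sum_powr:
  fixes p :: "'a \<Rightarrow> real"
  assumes nonneg: "\<And>k. k \<in> S \<Longrightarrow> 0 \<le> p k"
    and bound: "\<And>k. k \<in> S \<Longrightarrow> p k \<le> \<mu>" and total: "sum p S = 1" and r: "r \<le> 1"
  shows "\<mu> powr (r - 1) \<le> (\<Sum>k\<in>S. p k powr r)"
proof -
  have "\<mu> powr (r - 1) = (\<Sum>k\<in>S. p k * \<mu> powr (r - 1))"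
    using total by (simp add: sum_distrib_right[symmetric])
  also have "\<dots> \<le> (\<Sum>k\<in>S. p k powr r)"
  proof (rule sum_mono)
    fix k assume k: "k \<in> S"
    show "p k * \<mu> powr (r - 1) \<le> p k powr r"
    proof (cases "p k = 0")
      case False
      then have "0 < p k" using nonneg k by force
      moreover have "\<mu> powr (r - 1) \<le> p k powr (r - 1)"
        using \<open>0 < p k\<close> bound k r by (intro powr_mono2') auto
      ultimately show ?thesis
        using powr_eq_mult_powr_minus_one[of "p k" r] by (simp add: mult_left_mono)
    qed simp
  qed
  finally show ?thesis .
qed

lemma renyi_exp_ge_inverse_max:
  fixes p :: "'a \<Rightarrow> real"
  assumes S: "finite S" and nonneg: "\<And>k. k \<in> S \<Longrightarrow> 0 \<le> p k"
    and bound: "\<And>k. k \<in> S \<Longrightarrow> p k \<le> \<mu>" and total: "sum p S = 1"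
    and r: "0 < r" "r \<noteq> 1"
  shows "1 / \<mu> \<le> exp (1 / (1 - r) * ln (\<Sum>k\<in>S. p k powr r))"
proof -
  obtain k0 where k0: "k0 \<in> S" "p k0 \<noteq> 0"
    using total by (metis sum.neutral zero_neq_one)
  then have "0 < p k0" using nonneg by force
  then have \<mu>: "0 < \<mu>" using bound k0(1) by force
  have sum_pos: "0 < (\<Sum>k\<in>S. p k powr r)"
    using \<open>0 < p k0\<close> k0(1) S by (intro sum_pos2[of _ k0]) auto
  have "- ln \<mu> \<le> 1 / (1 - r) * ln (\<Sum>k\<in>S. p k powr r)"
  proof (cases "1 < r")
    case True
    have "ln (\<Sum>k\<in>S. p k powr r) \<le> ln (\<mu> powr (r - 1))"
      using sum_powr_le_bound_powr[OF nonneg bound total less_imp_le[OF True]] sum_pos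
      by (rule ln_mono)
    then have "1 / (1 - r) * ((r - 1) * ln \<mu>) \<le> 1 / (1 - r) * ln (\<Sum>k\<in>S. p k powr r)"
      using True by (intro mult_left_mono_neg) auto
    moreover have "1 / (1 - r) * ((r - 1) * ln \<mu>) = - ln \<mu>"
      using True by (simp add: field_simps)
    ultimately show ?thesis by simp
  next
    case False
    then have "r < 1" using r by simp
    have "0 < \<mu> powr (r - 1)" using \<mu> by simp
    with bound_powr_le_sum_powr[OF nonneg bound total less_imp_le[OF \<open>r < 1\<close>]]
    have "ln (\<mu> powr (r - 1)) \<le> ln (\<Sum>k\<in>S. p k powr r)"
      by (rule ln_mono)
    then have "1 / (1 - r) * ((r - 1) * ln \<mu>) \<le> 1 / (1 - r) * ln (\<Sum>k\<in>S. p k powr r)"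
      using \<open>r < 1\<close> by (intro mult_left_mono) auto
    moreover have "1 / (1 - r) * ((r - 1) * ln \<mu>) = - ln \<mu>"
      using \<open>r < 1\<close> by (simp add: field_simps)
    ultimately show ?thesis by simp
  qed
  then have "exp (- ln \<mu>) \<le> exp (1 / (1 - r) * ln (\<Sum>k\<in>S. p k powr r))" by simp
  then show ?thesis using \<mu> by (simp add: exp_minus inverse_eq_divide)
qed

lemma shannon_exp_ge_inverse_max:
  fixes p :: "'a \<Rightarrow> real"
  assumes nonneg: "\<And>k. k \<in> S \<Longrightarrow> 0 \<le> p k"
    and bound: "\<And>k. k \<in> S \<Longrightarrow> p k \<le> \<mu>" and total: "sum p S = 1"
  shows "1 / \<mu> \<le> exp (- (\<Sum>k\<in>S. p k * ln (p k)))"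
proof -
  obtain k0 where k0: "k0 \<in> S" "p k0 \<noteq> 0"
    using total by (metis sum.neutral zero_neq_one)
  then have \<mu>: "0 < \<mu>" using nonneg bound by force
  have "(\<Sum>k\<in>S. p k * ln (p k)) \<le> (\<Sum>k\<in>S. p k * ln \<mu>)"
  proof (rule sum_mono)
    fix k assume k: "k \<in> S"
    show "p k * ln (p k) \<le> p k * ln \<mu>"
    proof (cases "p k = 0")
      case False
      then show ?thesis using nonneg[OF k] bound[OF k] by (simp add: mult_left_mono)
    qed simp
  qed
  also have "\<dots> = ln \<mu>" using total by (simp add: sum_distrib_right[symmetric])
  finally have "exp (- ln \<mu>) \<le> exp (- (\<Sum>k\<in>S. p k * ln (p k)))" by simp
  then show ?thesis using \<mu> by (simp add: exp_minus inverse_eq_divide)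
qed

lemma sq_infinity_le_sq:
  fixes x :: "real ^ 'p" and q :: ereal
  assumes x: "x \<noteq> 0" and q: "0 \<le> q"
  shows "sq \<infinity> x \<le> sq q x"
proof -
  define M where "M = Max (range (\<lambda>j. \<bar>x $ j\<bar>))"
  define L where "L = l1norm x"
  have le_M: "\<bar>x $ k\<bar> \<le> M" for k
    unfolding M_def by (rule Max_ge) auto
  obtain k0 where k0: "x $ k0 \<noteq> 0"
    using x by (metis vec_eq_iff zero_index)
  then have M: "0 < M" using le_M[of k0] by linarith
  have L: "0 < L"
    unfolding L_def l1norm_def using k0 by (intro sum_pos2[of _ k0]) auto
  have p_nonneg: "0 \<le> pvec x k" for k
    using L by (simp add: pvec_def L_def)
  have p_le: "pvec x k \<le> M / L" for k
    using L le_M[of k] by (simp add: pvec_def L_def[symmetric] divide_right_mono)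
  have p_total: "sum (pvec x) UNIV = 1"
    using L by (simp add: pvec_def sum_divide_distrib[symmetric] L_def l1norm_def)
  consider "q = \<infinity>" | "q = 0" | "q = 1" | r where "q = ereal r" "0 < r" "r \<noteq> 1"
    using q by (cases q) (force simp: zero_ereal_def one_ereal_def)+
  then have "L / M \<le> sq q x"
  proof cases
    case 1
    then show ?thesis by (simp add: sq_def M_def L_def)
  next
    case 2
    have "L = (\<Sum>k\<in>{k. x $ k \<noteq> 0}. \<bar>x $ k\<bar>)"
      unfolding L_def l1norm_def by (rule sum.mono_neutral_right) auto
    also have "\<dots> \<le> (\<Sum>k\<in>{k. x $ k \<noteq> 0}. M)"
      by (rule sum_mono) (rule le_M)
    finally have "L \<le> real (card {k. x $ k \<noteq> 0}) * M" by simp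
    then show ?thesis using 2 M by (simp add: sq_def divide_le_eq)
  next
    case 3
    then show ?thesis
      using shannon_exp_ge_inverse_max[of UNIV "pvec x" "M / L"] p_nonneg p_le p_total
      by (simp add: sq_def)
  next
    case 4
    then show ?thesis
      using renyi_exp_ge_inverse_max[of UNIV "pvec x" "M / L" r] p_nonneg p_le p_total
      by (simp add: sq_def)
  qed
  moreover have "sq \<infinity> x = L / M" by (simp add: sq_def M_def L_def)
  ultimately show ?thesis by simp
qed

lemma sq_axis:
  fixes q :: ereal
  assumes "c \<noteq> 0"
  shows "sq q (axis i c :: real ^ 'p) = 1"
proof -
  let ?y = "axis i c :: real ^ 'p"
  have l1: "l1norm ?y = \<bar>c\<bar>"
    unfolding l1norm_def axis_def by (simp add: if_distrib cong: if_cong)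
  have p: "pvec ?y j = (if j = i then 1 else 0)" for j
    using assms unfolding pvec_def l1 by (simp add: axis_def)
  have max: "Max (range (\<lambda>j. \<bar>?y $ j\<bar>)) = \<bar>c\<bar>"
    by (rule Max_eqI) (auto simp: axis_def intro: range_eqI[of _ _ i])
  have support: "{j. ?y $ j \<noteq> 0} = {i}"
    using assms by (auto simp: axis_def)
  have "pvec ?y j powr r = (if j = i then 1 else 0)" for j r
    by (simp add: p)
  then have "(\<Sum>j\<in>UNIV. pvec ?y j powr r) = 1" for r
    by simp
  moreover have "(\<Sum>j\<in>UNIV. pvec ?y j * ln (pvec ?y j)) = 0"
    by (rule sum.neutral) (simp add: p)
  ultimately show ?thesis
    using assms by (simp add: sq_def l1 max support)
qed

lemma two_le_sq_of_two_maximal_entries: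
  fixes x :: "real ^ 'p" and q :: ereal
  assumes q: "0 \<le> q" and "i \<noteq> j" "\<bar>x $ j\<bar> = \<bar>x $ i\<bar>" "x $ i \<noteq> 0"
    and maximal: "\<And>k. \<bar>x $ k\<bar> \<le> \<bar>x $ i\<bar>"
  shows "2 \<le> sq q x"
proof -
  have x: "x \<noteq> 0" using assms(4) by auto
  have max: "Max (range (\<lambda>k. \<bar>x $ k\<bar>)) = \<bar>x $ i\<bar>"
    by (rule Max_eqI) (auto intro: maximal)
  have "(\<Sum>k\<in>{i, j}. \<bar>x $ k\<bar>) \<le> l1norm x"
    unfolding l1norm_def by (rule sum_mono2) auto
  then have "2 * \<bar>x $ i\<bar> \<le> l1norm x" using assms(2,3) by simp
  then have "2 \<le> sq \<infinity> x"
    using assms(4) by (simp add: sq_def max le_divide_eq)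
  then show ?thesis using sq_infinity_le_sq[OF x q] by linarith
qed

lemma indistinguishable_concentrated_and_spread_vectors:
  fixes A :: "real ^ 'p ^ 'n"
  assumes "CARD('n) < CARD('p)"
  obtains x y :: "real ^ 'p"
  where "x \<noteq> 0" "y \<noteq> 0" "A *v x = A *v y"
    "\<And>q :: ereal. 0 \<le> q \<Longrightarrow> 2 \<le> sq q x" "\<And>q. sq q y = 1"
proof -
  obtain v where v: "v \<noteq> 0" "A *v v = 0"
    using matrix_vector_mult_kernel_nontrivial[OF assms] by blast
  define M where "M = Max (range (\<lambda>k. \<bar>v $ k\<bar>))"
  have le_M: "\<bar>v $ k\<bar> \<le> M" for k
    unfolding M_def by (rule Max_ge) auto
  have "M \<in> range (\<lambda>k. \<bar>v $ k\<bar>)"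
    unfolding M_def by (rule Max_in) auto
  then obtain j where j: "\<bar>v $ j\<bar> = M" by auto
  obtain k0 where "v $ k0 \<noteq> 0"
    using v(1) by (metis vec_eq_iff zero_index)
  then have M: "0 < M" using le_M[of k0] by linarith
  have "{j} \<noteq> UNIV"
  proof
    assume "{j} = UNIV"
    then have "CARD('p) = card {j}" by simp
    then show False using assms zero_less_card_finite[where 'a='n] by simp
  qed
  then obtain i :: 'p where ij: "i \<noteq> j" by auto
  define t where "t = (if v $ i = M then - M else M)"
  have t: "t \<noteq> v $ i" "\<bar>t\<bar> = M"
    using M by (auto simp: t_def)
  define y where "y = axis i (t - v $ i)"
  define x where "x = v + y"
  have x_i: "x $ i = t" and x_k: "\<And>k. k \<noteq> i \<Longrightarrow> x $ k = v $ k"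
    by (auto simp: x_def y_def axis_def)
  have x_i_nonzero: "x $ i \<noteq> 0" using x_i t M by auto
  have x_le: "\<bar>x $ k\<bar> \<le> \<bar>x $ i\<bar>" for k
    by (cases "k = i") (simp_all add: x_i x_k t le_M)
  have x_j: "\<bar>x $ j\<bar> = \<bar>x $ i\<bar>" using ij j by (simp add: x_i x_k t)
  show ?thesis
  proof
    show "x \<noteq> 0" using x_i_nonzero by auto
    show "y \<noteq> 0" using t by (simp add: y_def)
    show "A *v x = A *v y" by (simp add: x_def matrix_vector_right_distrib v(2))
    show "sq q y = 1" for q using t by (simp add: y_def sq_axis)
    show "2 \<le> sq q x" if "0 \<le> q" for q
      using two_le_sq_of_two_maximal_entries[OF that ij x_j x_i_nonzero x_le] .
  qed
qed

lemma relative_error_ge_one_third: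
  fixes d s :: real
  assumes "2 \<le> s"
  shows "1/3 \<le> \<bar>d / s - 1\<bar> \<or> 1/3 \<le> \<bar>d - 1\<bar>"
proof (rule disjCI)
  assume "\<not> 1/3 \<le> \<bar>d - 1\<bar>"
  then have "0 < d" "d < 4/3" by (auto simp: abs_if split: if_splits)
  moreover have "d / s \<le> d / 2"
    using assms \<open>0 < d\<close> by (intro divide_left_mono) auto
  ultimately show "1/3 \<le> \<bar>d / s - 1\<bar>" by auto
qed

lemma estimator_relative_error_ge_one_third:
  fixes A :: "real ^ 'p ^ 'n" and \<delta> :: "real ^ 'n \<Rightarrow> real" and q :: ereal
  assumes "CARD('n) < CARD('p)" "0 \<le> q"
  shows "ereal (1/3) \<le> (SUP x \<in> UNIV - {0}. ereal \<bar>\<delta> (A *v x) / sq q x - 1\<bar>)"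
proof -
  obtain x y :: "real ^ 'p" where xy: "x \<noteq> 0" "y \<noteq> 0" "A *v x = A *v y"
    and "2 \<le> sq q x" "sq q y = 1"
    using indistinguishable_concentrated_and_spread_vectors[OF assms(1)] assms(2) by metis
  then have "1/3 \<le> \<bar>\<delta> (A *v x) / sq q x - 1\<bar> \<or> 1/3 \<le> \<bar>\<delta> (A *v y) / sq q y - 1\<bar>"
    using relative_error_ge_one_third[of "sq q x" "\<delta> (A *v y)"] by simp
  moreover have "ereal \<bar>\<delta> (A *v z) / sq q z - 1\<bar> \<le> (SUP x \<in> UNIV - {0}. ereal \<bar>\<delta> (A *v x) / sq q x - 1\<bar>)"
    if "z \<noteq> 0" for z
    using that by (intro SUP_upper) auto
  ultimately show ?thesis
    using xy by (meson ereal_less_eq(3) order_trans)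
qed

lemma minimax_relative_error_ge_one_third:
  fixes q :: ereal
  assumes "CARD('n) < CARD('p)" "0 \<le> q"
  shows "ereal (1/3) \<le> (INF A :: real ^ 'p ^ 'n. INF \<delta> :: real ^ 'n \<Rightarrow> real.
           SUP x \<in> UNIV - {0 :: real ^ 'p}. ereal \<bar>\<delta> (A *v x) / sq q x - 1\<bar>)"
  using estimator_relative_error_ge_one_third[OF assms] by (intro INF_greatest)

lemma nine_le_two_pi_exp_one: "9 \<le> 2 * pi * exp (1::real)"
proof -
  have "3 * 2 \<le> pi * exp (1::real)"
    using pi_gt3 exp_ge_add_one_self[of 1] by (intro mult_mono) auto
  then show ?thesis by linarith
qed

lemma quadratic_rate_bound_le_one_third:
  fixes a P :: real
  assumes "0 \<le> a" "a \<le> 1" "0 \<le> P"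
  shows "1 / (2 * pi * exp 1) * a^2 - 1 / (2 * P) \<le> 1/3"
proof -
  have "1 / (2 * pi * exp 1) \<le> 1/9"
    using nine_le_two_pi_exp_one by (simp add: divide_simps)
  moreover have "a^2 \<le> 1" using assms by (simp add: power_le_one)
  ultimately have "1 / (2 * pi * exp 1) * a^2 \<le> 1/9 * 1"
    by (rule mult_mono) simp_all
  moreover have "0 \<le> 1 / (2 * P)" using assms(3) by simp
  ultimately show ?thesis by linarith
qed

lemma logarithmic_rate_bound_le_one_third:
  fixes a P :: real
  assumes a: "0 \<le> a" "a \<le> 1" and P: "1 \<le> 2 * P"
  shows "1 / sqrt (2 * pi * exp 1) * (a / (1 + sqrt (16 * ln (2 * P)))) - 1 / (2 * P) \<le> 1/3"
proof -
  have "0 \<le> sqrt (16 * ln (2 * P))"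
    using P by simp
  then have denominator: "0 < 1 + sqrt (16 * ln (2 * P))" "a \<le> 1 + sqrt (16 * ln (2 * P))"
    using a by linarith+
  then have "a / (1 + sqrt (16 * ln (2 * P))) \<le> 1 \<and> 0 \<le> a / (1 + sqrt (16 * ln (2 * P)))"
    using a divide_le_eq_1_pos[OF denominator(1)] by simp
  moreover have "sqrt 9 \<le> sqrt (2 * pi * exp 1)"
    using nine_le_two_pi_exp_one by (rule real_sqrt_le_mono)
  then have "1 / sqrt (2 * pi * exp 1) \<le> 1/3"
    by (simp add: divide_simps)
  ultimately have "1 / sqrt (2 * pi * exp 1) * (a / (1 + sqrt (16 * ln (2 * P)))) \<le> 1/3 * 1"
    by (intro mult_mono) simp_all
  moreover have "0 \<le> 1 / (2 * P)" using P by simp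
  ultimately show ?thesis by linarith
qed

theorem theorem4:
  fixes q :: ereal
  assumes "CARD('n) < CARD('p)"
  shows "(q \<in> {0..2} \<longrightarrow>
           ereal (1 / (2 * pi * exp 1) * (1 - real CARD('n) / real CARD('p))^2
                  - 1 / (2 * real CARD('p)))
           \<le> (INF A :: real ^ 'p ^ 'n. INF \<delta> :: real ^ 'n \<Rightarrow> real.
                 SUP x \<in> UNIV - {0 :: real ^ 'p}. ereal \<bar>\<delta> (A *v x) / sq q x - 1\<bar>))
       \<and> (q \<in> {2<..} \<longrightarrow>
           ereal (1 / sqrt (2 * pi * exp 1) *
                  ((1 - real CARD('n) / real CARD('p)) /
                   (1 + sqrt (16 * ln (2 * real CARD('p)))))
                  - 1 / (2 * real CARD('p)))
           \<le> (INF A :: real ^ 'p ^ 'n. INF \<delta> :: real ^ 'n \<Rightarrow> real.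
                 SUP x \<in> UNIV - {0 :: real ^ 'p}. ereal \<bar>\<delta> (A *v x) / sq q x - 1\<bar>))"
proof -
  have a: "0 \<le> 1 - real CARD('n) / real CARD('p)" "1 - real CARD('n) / real CARD('p) \<le> 1"
    using assms by auto
  have P: "1 \<le> 2 * real CARD('p)"
    using zero_less_card_finite[where 'a='p] by linarith
  have "0 \<le> q" if "q \<in> {2<..}"
    using that by (cases q) auto
  then show ?thesis
    using order_trans[OF _ minimax_relative_error_ge_one_third[OF assms]]
      quadratic_rate_bound_le_one_third[OF a] logarithmic_rate_bound_le_one_third[OF a P]
    by auto
qed

end
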